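(* Let $m,p\ge1$, matrices in $\mathbb{R}^{m\times p}$ being viewed as $m$-tuples of slices $P^{(1)},\dots,P^{(m)}\in\mathbb{R}^p$ with Frobenius inner product $\langle\cdot,\cdot\rangle$ and Frobenius norm $\|\cdot\|$. Let $f:\mathbb{R}^{m\times p}\to\mathbb{R}$ be differentiable, fix $\theta\in\mathbb{R}^{m\times p}$ with all slices $\theta^{(j)}\ne0$, and let $\xi$ be a random matrix in $\mathbb{R}^{m\times p}$ with $\mathbb{E}[\xi]=0$ (integrable). Set the stochastic gradient $\tilde g=\nabla f(\theta)+\xi$. Assume that almost surely every slice $\tilde g^{(j)}\ne0$ and the angle $\phi^{(j)}$ between $\tilde g^{(j)}$ and $\theta^{(j)}$ satisfies $\sin(\phi^{(j)})\ge\gamma$ for a constant $\gamma>0$, for all $j$. Define slice-wise $\hat\theta^{(j)}=\theta^{(j)}/\|\theta^{(j)}\|$, $v^{(j)}=\tilde g^{(j)}-\langle\tilde g^{(j)},\hat\theta^{(j)}\rangle\hat\theta^{(j)}$, $\hat v^{(j)}=v^{(j)}/\|v^{(j)}\|$. Then $$\mathbb{E}_{\xi}\big[\langle \tilde g,\hat v\rangle\big]\ \ge\ \gamma\,\|\nabla f(\theta)\|.$$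
   Context: Stochastic version of the simplified Mano step (no momentum, static Oblique manifold normalization over the $m$ slices), where the update direction $\hat v$ is built from the stochastic gradient $\tilde g$, an unbiased estimator of $\nabla f(\theta)$. *)

theory Defs
  imports "HOL-Analysis.Analysis" "HOL-Probability.Probability"
begin

text \<open>Matrices in R^{m x p} are modelled as real^'p^'m: the j-th slice of P is P $ j :: real^'p.
  The inner product / norm on real^'p^'m is the Frobenius one.\<close>

definition vec_angle :: "'a::real_inner \<Rightarrow> 'a \<Rightarrow> real" where
  "vec_angle u v = arccos (inner u v / (norm u * norm v))"

definition slice_normalize :: "real^'p^'m \<Rightarrow> real^'p^'m" where
  "slice_normalize \<theta> = (\<chi> j. (\<theta> $ j) /\<^sub>R norm (\<theta> $ j))"

definition tangent_proj :: "real^'p^'m \<Rightarrow> real^'p^'m \<Rightarrow> real^'p^'m" where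
  "tangent_proj \<theta> g = (\<chi> j. g $ j - inner (g $ j) (slice_normalize \<theta> $ j) *\<^sub>R (slice_normalize \<theta> $ j))"

definition mano_dir :: "real^'p^'m \<Rightarrow> real^'p^'m \<Rightarrow> real^'p^'m" where
  "mano_dir \<theta> g = (\<chi> j. (tangent_proj \<theta> g $ j) /\<^sub>R norm (tangent_proj \<theta> g $ j))"

end

theory Submission
  imports Defs
begin

text \<open>Removing from a slice g of the stochastic gradient its component along the unit vector
  \<theta>/|\<theta>| leaves a vector v of length |g| sin \<phi>, and \<langle>g, v/|v|\<rangle> = |v|.  Hence the
  inner product of the stochastic gradient with the update direction is the sum of the slice
  lengths |v_j| \<ge> \<gamma> |g_j|, which dominates \<gamma> |g| because the Frobenius norm is at most the
  sum of the slice norms.  Taking expectations and using Jensen's inequality |E g| \<le> E |g|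
  together with E g = G gives the claim.\<close>

lemma norm_reject_unit_squared:
  fixes a u :: "'a::real_inner"
  assumes "norm u = 1"
  shows "(norm (a - inner a u *\<^sub>R u))\<^sup>2 = (norm a)\<^sup>2 - (inner a u)\<^sup>2"
proof -
  have "inner u u = 1"
    using assms power2_norm_eq_inner[of u] by simp
  then have "inner (a - inner a u *\<^sub>R u) (a - inner a u *\<^sub>R u) = inner a a - (inner a u)\<^sup>2"
    by (simp add: inner_diff_left inner_diff_right power2_eq_square inner_commute)
  then show ?thesis
    by (simp only: power2_norm_eq_inner)
qed

lemma inner_reject_unit:
  fixes a u :: "'a::real_inner"
  assumes "norm u = 1"
  shows "inner a (a - inner a u *\<^sub>R u) = (norm (a - inner a u *\<^sub>R u))\<^sup>2"
proof -
  have "inner a (a - inner a u *\<^sub>R u) = inner a a - (inner a u)\<^sup>2"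
    by (simp add: inner_diff_right power2_eq_square)
  also have "\<dots> = (norm a)\<^sup>2 - (inner a u)\<^sup>2"
    by (simp only: power2_norm_eq_inner)
  also have "\<dots> = (norm (a - inner a u *\<^sub>R u))\<^sup>2"
    by (rule norm_reject_unit_squared[OF assms, symmetric])
  finally show ?thesis .
qed

lemma norm_reject_unit_le:
  fixes a u :: "'a::real_inner"
  assumes "norm u = 1"
  shows "norm (a - inner a u *\<^sub>R u) \<le> norm a"
proof (rule power2_le_imp_le)
  show "(norm (a - inner a u *\<^sub>R u))\<^sup>2 \<le> (norm a)\<^sup>2"
    unfolding norm_reject_unit_squared[OF assms] by simp
qed simp

lemma norm_reject_eq_sin_vec_angle:
  fixes a b :: "'a::real_inner"
  assumes "a \<noteq> 0" and "b \<noteq> 0"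
  shows "norm (a - inner a (b /\<^sub>R norm b) *\<^sub>R (b /\<^sub>R norm b)) = norm a * sin (vec_angle a b)"
proof -
  define u where "u = b /\<^sub>R norm b"
  define c where "c = inner a b / (norm a * norm b)"
  have unit: "norm u = 1"
    using assms by (simp add: u_def)
  have c_eq: "c = inner a u / norm a"
    using assms by (simp add: c_def u_def field_simps)
  have "\<bar>inner a u\<bar> \<le> norm a"
    using Cauchy_Schwarz_ineq2[of a u] unit by simp
  then have c_abs: "\<bar>c\<bar> \<le> 1"
    using assms by (simp add: c_eq abs_divide divide_le_eq_1)
  then have c_sq: "c\<^sup>2 \<le> 1"
    by (simp add: abs_square_le_1)
  have sin_eq: "sin (vec_angle a b) = sqrt (1 - c\<^sup>2)"
    unfolding vec_angle_def c_def[symmetric] using c_abs by (intro sin_arccos) auto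
  have "(norm a * sqrt (1 - c\<^sup>2))\<^sup>2 = (norm a)\<^sup>2 * (1 - c\<^sup>2)"
    using c_sq by (simp add: power_mult_distrib)
  also have "\<dots> = (norm a)\<^sup>2 - (inner a u)\<^sup>2"
    using assms by (simp add: c_eq power_divide field_simps)
  also have "\<dots> = (norm (a - inner a u *\<^sub>R u))\<^sup>2"
    by (rule norm_reject_unit_squared[OF unit, symmetric])
  finally have "(norm (a - inner a u *\<^sub>R u))\<^sup>2 = (norm a * sqrt (1 - c\<^sup>2))\<^sup>2" ..
  then show ?thesis
    unfolding u_def[symmetric] sin_eq by (rule power2_eq_imp_eq) (simp_all add: c_sq)
qed

lemma norm_slice_normalize:
  "\<theta> $ j \<noteq> 0 \<Longrightarrow> norm (slice_normalize \<theta> $ j) = 1"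
  by (simp add: slice_normalize_def)

lemma tangent_proj_nth:
  "tangent_proj \<theta> g $ j = g $ j - inner (g $ j) (slice_normalize \<theta> $ j) *\<^sub>R slice_normalize \<theta> $ j"
  by (simp add: tangent_proj_def)

lemma inner_mano_dir:
  fixes \<theta> g :: "real^'p^'m"
  assumes "\<forall>j. \<theta> $ j \<noteq> 0"
  shows "inner g (mano_dir \<theta> g) = (\<Sum>j\<in>UNIV. norm (tangent_proj \<theta> g $ j))"
proof -
  have "inner (g $ j) (tangent_proj \<theta> g $ j /\<^sub>R norm (tangent_proj \<theta> g $ j))
          = norm (tangent_proj \<theta> g $ j)" for j
    using inner_reject_unit[OF norm_slice_normalize, of \<theta> j "g $ j"] assms
    by (cases "tangent_proj \<theta> g $ j = 0") (simp_all add: tangent_proj_nth power2_eq_square)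
  then show ?thesis
    by (simp add: inner_vec_def mano_dir_def)
qed

lemma norm_tangent_proj_le:
  fixes \<theta> g :: "real^'p^'m"
  assumes "\<theta> $ j \<noteq> 0"
  shows "norm (tangent_proj \<theta> g $ j) \<le> norm g"
  using norm_reject_unit_le[OF norm_slice_normalize[OF assms], of "g $ j"]
    Finite_Cartesian_Product.norm_nth_le[of g j]
  by (simp add: tangent_proj_nth)

lemma sum_norm_tangent_proj_ge:
  fixes \<theta> g :: "real^'p^'m"
  assumes "\<forall>j. \<theta> $ j \<noteq> 0" and "\<gamma> \<ge> 0"
    and "\<forall>j. g $ j \<noteq> 0 \<and> sin (vec_angle (g $ j) (\<theta> $ j)) \<ge> \<gamma>"
  shows "\<gamma> * norm g \<le> (\<Sum>j\<in>UNIV. norm (tangent_proj \<theta> g $ j))"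
proof -
  have "norm g \<le> (\<Sum>j\<in>UNIV. norm (g $ j))"
    by (simp add: norm_vec_def L2_set_le_sum)
  then have "\<gamma> * norm g \<le> \<gamma> * (\<Sum>j\<in>UNIV. norm (g $ j))"
    using assms(2) by (rule mult_left_mono)
  also have "\<dots> = (\<Sum>j\<in>UNIV. \<gamma> * norm (g $ j))"
    by (rule sum_distrib_left)
  also have "\<dots> \<le> (\<Sum>j\<in>UNIV. norm (tangent_proj \<theta> g $ j))"
  proof (rule sum_mono)
    fix j
    have "norm (tangent_proj \<theta> g $ j) = norm (g $ j) * sin (vec_angle (g $ j) (\<theta> $ j))"
      using norm_reject_eq_sin_vec_angle[of "g $ j" "\<theta> $ j"] assms
      by (simp add: tangent_proj_nth slice_normalize_def)
    then show "\<gamma> * norm (g $ j) \<le> norm (tangent_proj \<theta> g $ j)"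
      using assms(3) by (simp add: mult.commute mult_left_mono)
  qed
  finally show ?thesis .
qed

lemma integrable_sum_norm_tangent_proj:
  fixes \<theta> :: "real^'p^'m" and X :: "'w \<Rightarrow> real^'p^'m"
  assumes "\<forall>j. \<theta> $ j \<noteq> 0" and "integrable M X"
  shows "integrable M (\<lambda>\<omega>. \<Sum>j\<in>UNIV. norm (tangent_proj \<theta> (X \<omega>) $ j))"
proof (rule Bochner_Integration.integrable_bound)
  show "integrable M (\<lambda>\<omega>. real CARD('m) * norm (X \<omega>))"
    using assms(2) by (intro integrable_mult_right integrable_norm)
  have "continuous_on UNIV (\<lambda>x. \<Sum>j\<in>UNIV. norm (tangent_proj \<theta> x $ j))"
    unfolding tangent_proj_def by (intro continuous_intros)
  then show "(\<lambda>\<omega>. \<Sum>j\<in>UNIV. norm (tangent_proj \<theta> (X \<omega>) $ j)) \<in> borel_measurable M"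
    using measurable_compose[OF borel_measurable_integrable[OF assms(2)] borel_measurable_continuous_onI]
    by simp
  have "(\<Sum>j\<in>UNIV. norm (tangent_proj \<theta> (X \<omega>) $ j)) \<le> (\<Sum>j::'m\<in>UNIV. norm (X \<omega>))" for \<omega>
    using assms(1) by (intro sum_mono) (simp add: norm_tangent_proj_le)
  then show "AE \<omega> in M. norm (\<Sum>j\<in>UNIV. norm (tangent_proj \<theta> (X \<omega>) $ j))
                        \<le> norm (real CARD('m) * norm (X \<omega>))"
    by (simp add: sum_nonneg)
qed

lemma mult_norm_integral_le_integral:
  fixes X :: "'w \<Rightarrow> 'a::{banach, second_countable_topology}"
  assumes "integrable M X" and "integrable M Y" and "\<gamma> \<ge> 0"
    and "AE \<omega> in M. \<gamma> * norm (X \<omega>) \<le> Y \<omega>"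
  shows "\<gamma> * norm (integral\<^sup>L M X) \<le> integral\<^sup>L M Y"
proof -
  have "\<gamma> * norm (integral\<^sup>L M X) \<le> \<gamma> * integral\<^sup>L M (\<lambda>\<omega>. norm (X \<omega>))"
    using integral_norm_bound assms(3) by (rule mult_left_mono)
  also have "\<dots> = integral\<^sup>L M (\<lambda>\<omega>. \<gamma> * norm (X \<omega>))"
    by simp
  also have "\<dots> \<le> integral\<^sup>L M Y"
    using assms(1,2,4) by (intro integral_mono_AE integrable_mult_right integrable_norm)
  finally show ?thesis .
qed

theorem mainTheorem2:
  fixes f :: "real^'p^'m \<Rightarrow> real"
    and \<theta> G :: "real^'p^'m"
    and M :: "'w measure"
    and \<xi> :: "'w \<Rightarrow> real^'p^'m"
    and \<gamma> :: real
  assumes diff: "\<And>x. f differentiable (at x)"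
    and grad: "(f has_derivative (\<lambda>h. inner G h)) (at \<theta>)"
    and theta_nz: "\<forall>j. \<theta> $ j \<noteq> 0"
    and M: "prob_space M"
    and meas: "\<xi> \<in> borel_measurable M"
    and integ: "integrable M \<xi>"
    and mean0: "integral\<^sup>L M \<xi> = 0"
    and gamma_pos: "\<gamma> > 0"
    and angle: "AE \<omega> in M. \<forall>j. (G + \<xi> \<omega>) $ j \<noteq> 0
                   \<and> sin (vec_angle ((G + \<xi> \<omega>) $ j) (\<theta> $ j)) \<ge> \<gamma>"
  shows "integral\<^sup>L M (\<lambda>\<omega>. inner (G + \<xi> \<omega>) (mano_dir \<theta> (G + \<xi> \<omega>))) \<ge> \<gamma> * norm G"
proof -
  interpret prob_space M by (rule M)
  have integ_g: "integrable M (\<lambda>\<omega>. G + \<xi> \<omega>)"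
    using integ by simp
  have mean_g: "integral\<^sup>L M (\<lambda>\<omega>. G + \<xi> \<omega>) = G"
    using integ mean0 by (simp add: prob_space)
  have "AE \<omega> in M. \<gamma> * norm (G + \<xi> \<omega>) \<le> (\<Sum>j\<in>UNIV. norm (tangent_proj \<theta> (G + \<xi> \<omega>) $ j))"
    using angle
    by eventually_elim (simp add: sum_norm_tangent_proj_ge[OF theta_nz less_imp_le[OF gamma_pos]])
  then have "\<gamma> * norm G \<le> integral\<^sup>L M (\<lambda>\<omega>. \<Sum>j\<in>UNIV. norm (tangent_proj \<theta> (G + \<xi> \<omega>) $ j))"
    using mult_norm_integral_le_integral[OF integ_g integrable_sum_norm_tangent_proj[OF theta_nz integ_g]]
      gamma_pos mean_g by simp
  then show ?thesis
    by (simp add: inner_mano_dir[OF theta_nz])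
qed

end
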